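(* Let $\alpha\neq\beta$ be complex numbers and let $(g_n)_{n\ge0}$ be the polynomials defined in the context. Then $$g_n(\alpha)=\frac{1}{n}\sum_{k=0}^{n-1}\binom{n}{k}\binom{n}{k+1}\beta^{n-k}\alpha^{k}\qquad (n\ge1),\qquad g_0(\alpha)=1 .$$
   Context: Fix complex numbers $\alpha\neq\beta$. Define polynomials $g_n(x)\in\mathbb{C}[x]$ recursively by $g_0(x)=1$ and, for $n\ge1$, $$(x-\alpha)(\alpha-\beta)^{n-1}g_n(x)=\alpha(x-\beta)^n g_{n-1}(\alpha)-x(\alpha-\beta)^n g_{n-1}(x).$$ (The right-hand side vanishes at $x=\alpha$, so it is divisible by $x-\alpha$ and $g_n$ is a uniquely determined polynomial.) Here $g_n(\alpha)$ denotes the value of the polynomial $g_n$ at $x=\alpha$. *)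

theory Defs
  imports "HOL-Computational_Algebra.Polynomial"
begin

text \<open>The recursion (x - a) (a - b)^(n-1) g_n(x) = a (x - b)^n g_{n-1}(a) - x (a - b)^n g_{n-1}(x)
  is solved for g_n by exact polynomial division by (x - a) (the right-hand side vanishes
  at x = a) followed by division by the scalar (a - b)^(n-1).\<close>

fun gpoly :: "complex \<Rightarrow> complex \<Rightarrow> nat \<Rightarrow> complex poly" where
  "gpoly a b 0 = 1"
| "gpoly a b (Suc n) =
     smult (inverse ((a - b) ^ n))
       ((smult (a * poly (gpoly a b n) a) ([:- b, 1:] ^ Suc n)
         - smult ((a - b) ^ Suc n) ([:0, 1:] * gpoly a b n)) div [:- a, 1:])"

end

theory Submission
  imports Defs
begin

text \<open>
  Substituting x = b + (a - b) t turns the recursion into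
  (t - 1) P_n(t) = a t^n P_{n-1}(1) - ((a - b) t + b) P_{n-1}(t) for P_n(t) = g_n(b + (a - b) t),
  and g_n(a) = P_n(1). On coefficients this reads p_n(j) = b p_{n-1}(j) + a (p_{n-1}(0) + ... + p_{n-1}(j-1)),
  which is solved explicitly: p_n(0) = b^n, and for j \<ge> 1 the coefficient of a^k b^(n-k) in p_n(j) is
  C(n-1,k) C(j-1,k-1) - C(n-1,k-1) C(j-1,k). By the hockey-stick identity these sum over j to
  C(n-1,k) C(n,k) - C(n-1,k-1) C(n,k+1) = C(n,k) C(n,k+1) / n, the Narayana numbers.
\<close>

definition refined_narayana :: "nat \<Rightarrow> nat \<Rightarrow> nat \<Rightarrow> int" where
  "refined_narayana n j k =
     (if j = 0 then (if k = 0 then 1 else 0)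
      else if k = 0 then 0
      else int (n - 1 choose k) * int (j - 1 choose (k - 1))
         - int (n - 1 choose (k - 1)) * int (j - 1 choose k))"

lemma sum_lessThan_choose: "(\<Sum>i<m. i choose r) = m choose Suc r"
  by (induction m) auto

lemma sum_refined_narayana_lessThan:
  "(\<Sum>i<Suc j. refined_narayana n i k) =
     (if k = 0 then 1
      else int (n - 1 choose k) * int (j choose k) - int (n - 1 choose (k - 1)) * int (j choose Suc k))"
proof -
  have "(\<Sum>i<Suc j. refined_narayana n i k) =
      refined_narayana n 0 k + (\<Sum>i<j. refined_narayana n (Suc i) k)"
    by (subst sum.lessThan_Suc_shift) simp
  also have "(\<Sum>i<j. refined_narayana n (Suc i) k) = (if k = 0 then 0 else
      int (n - 1 choose k) * int (\<Sum>i<j. i choose (k - 1))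
    - int (n - 1 choose (k - 1)) * int (\<Sum>i<j. i choose k))"
    by (simp add: refined_narayana_def sum_distrib_left sum_subtractf)
  finally show ?thesis
    by (cases k) (simp_all add: sum_lessThan_choose refined_narayana_def)
qed

lemma refined_narayana_Suc:
  assumes "j \<le> n"
  shows "refined_narayana (Suc n) j k =
    refined_narayana n j k + (if k = 0 then 0 else (\<Sum>i<j. refined_narayana n i (k - 1)))"
proof (cases "j = 0 \<or> k = 0")
  case True
  then show ?thesis by (auto simp: refined_narayana_def)
next
  case False
  then obtain j' k' n' where "j = Suc j'" "k = Suc k'" "n = Suc n'"
    using assms by (metis Suc_le_D not0_implies_Suc)
  then show ?thesis
    by (simp only: sum_refined_narayana_lessThan)
      (cases k', simp_all add: refined_narayana_def algebra_simps)
qed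

lemma refined_narayana_Suc_diag: "refined_narayana (Suc n) (Suc n) k = 0"
  by (simp add: refined_narayana_def)

lemma refined_narayana_above: "j \<le> n \<Longrightarrow> refined_narayana n j (Suc n) = 0"
  by (cases n) (auto simp: refined_narayana_def binomial_eq_0)

lemma sum_refined_narayana:
  "int n * (\<Sum>j\<le>n. refined_narayana n j k) = int (n choose k) * int (n choose Suc k)"
proof (cases n)
  case (Suc m)
  have Suc_times_choose: "int (Suc m) * int (m choose i) = int (Suc m choose Suc i) * int (Suc i)" for i
    by (metis Suc_times_binomial_eq of_nat_mult)
  show ?thesis
  proof (cases k)
    case (Suc k')
    have "int n * (\<Sum>j\<le>n. refined_narayana n j k) =
        (int (Suc m) * int (m choose k)) * int (Suc m choose k)
      - (int (Suc m) * int (m choose k')) * int (Suc m choose Suc k)"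
      unfolding \<open>n = Suc m\<close> lessThan_Suc_atMost[symmetric] sum_refined_narayana_lessThan
      using Suc by (simp add: algebra_simps del: of_nat_Suc)
    also have "\<dots> = int (n choose k) * int (n choose Suc k)"
      unfolding Suc_times_choose using Suc \<open>n = Suc m\<close> by (simp add: algebra_simps)
    finally show ?thesis .
  qed (simp only: \<open>n = Suc m\<close> lessThan_Suc_atMost[symmetric] sum_refined_narayana_lessThan, simp)
qed simp

definition narayana_entry :: "'a::comm_ring_1 \<Rightarrow> 'a \<Rightarrow> nat \<Rightarrow> nat \<Rightarrow> 'a" where
  "narayana_entry a b n j = (\<Sum>k\<le>n. of_int (refined_narayana n j k) * a ^ k * b ^ (n - k))"

definition narayana_gen :: "'a::comm_ring_1 \<Rightarrow> 'a \<Rightarrow> nat \<Rightarrow> 'a poly" where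
  "narayana_gen a b n = (\<Sum>j\<le>n. monom (narayana_entry a b n j) j)"

lemma poly_narayana_gen: "poly (narayana_gen a b n) t = (\<Sum>j\<le>n. narayana_entry a b n j * t ^ j)"
  by (simp add: narayana_gen_def poly_sum poly_monom)

lemma narayana_entry_Suc:
  assumes "j \<le> n"
  shows "narayana_entry a b (Suc n) j = b * narayana_entry a b n j + a * (\<Sum>i<j. narayana_entry a b n i)"
proof -
  have "narayana_entry a b (Suc n) j =
      (\<Sum>k\<le>Suc n. of_int (refined_narayana n j k) * a ^ k * b ^ (Suc n - k))
    + (\<Sum>k\<le>Suc n. of_int (if k = 0 then 0 else \<Sum>i<j. refined_narayana n i (k - 1))
        * a ^ k * b ^ (Suc n - k))"
    unfolding narayana_entry_def refined_narayana_Suc[OF assms]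
    by (simp add: algebra_simps sum.distrib)
  also have "(\<Sum>k\<le>Suc n. of_int (refined_narayana n j k) * a ^ k * b ^ (Suc n - k)) =
      b * narayana_entry a b n j"
    using refined_narayana_above[OF assms]
    by (simp add: narayana_entry_def sum_distrib_left Suc_diff_le algebra_simps)
  also have "(\<Sum>k\<le>Suc n. of_int (if k = 0 then 0 else \<Sum>i<j. refined_narayana n i (k - 1))
        * a ^ k * b ^ (Suc n - k)) =
      (\<Sum>k\<le>n. of_int (\<Sum>i<j. refined_narayana n i k) * a ^ Suc k * b ^ (n - k))"
    by (subst sum.atMost_Suc_shift) simp
  also have "\<dots> = a * (\<Sum>i<j. narayana_entry a b n i)"
    unfolding narayana_entry_def
    by (simp add: sum_distrib_left sum_distrib_right algebra_simps sum.swap[of _ "{..<j}"])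
  finally show ?thesis .
qed

lemma narayana_entry_Suc_diag: "narayana_entry a b (Suc n) (Suc n) = 0"
  by (simp add: narayana_entry_def refined_narayana_Suc_diag)

lemma prefix_sums_times_pred:
  fixes t :: "'a::comm_ring_1"
  shows "(t - 1) * (\<Sum>j\<le>n. (\<Sum>i<j. f i) * t ^ j) =
    t ^ Suc n * (\<Sum>j\<le>n. f j) - t * (\<Sum>j\<le>n. f j * t ^ j)"
  by (induction n) (simp_all add: lessThan_Suc_atMost algebra_simps)

lemma narayana_gen_recurrence:
  "(t - 1) * poly (narayana_gen a b (Suc n)) t =
    a * t ^ Suc n * poly (narayana_gen a b n) 1 - ((a - b) * t + b) * poly (narayana_gen a b n) t"
proof -
  define G where "G = (\<Sum>j\<le>n. (\<Sum>i<j. narayana_entry a b n i) * t ^ j)"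
  have "poly (narayana_gen a b (Suc n)) t = b * poly (narayana_gen a b n) t + a * G"
    by (simp add: G_def poly_narayana_gen narayana_entry_Suc_diag narayana_entry_Suc
        sum_distrib_left sum.distrib algebra_simps)
  moreover have "(t - 1) * G = t ^ Suc n * poly (narayana_gen a b n) 1 - t * poly (narayana_gen a b n) t"
    unfolding G_def prefix_sums_times_pred poly_narayana_gen by simp
  ultimately have "(t - 1) * poly (narayana_gen a b (Suc n)) t =
      b * (t - 1) * poly (narayana_gen a b n) t + a * ((t - 1) * G)"
    by (simp add: algebra_simps)
  then show ?thesis
    unfolding \<open>(t - 1) * G = _\<close> by (simp add: algebra_simps)
qed

lemma narayana_gen_at_1:
  "of_nat n * poly (narayana_gen a b n) 1 =
    (\<Sum>k<n. of_nat (n choose k) * of_nat (n choose Suc k) * b ^ (n - k) * a ^ k)"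
proof -
  have coeff: "of_nat n * of_int (\<Sum>j\<le>n. refined_narayana n j k) =
      (of_nat (n choose k) * of_nat (n choose Suc k) :: 'a)" for k
    by (metis of_int_mult of_int_of_nat_eq sum_refined_narayana)
  have "poly (narayana_gen a b n) 1 =
      (\<Sum>j\<le>n. \<Sum>k\<le>n. of_int (refined_narayana n j k) * a ^ k * b ^ (n - k))"
    by (simp add: poly_narayana_gen narayana_entry_def)
  also have "\<dots> = (\<Sum>k\<le>n. of_int (\<Sum>j\<le>n. refined_narayana n j k) * a ^ k * b ^ (n - k))"
    by (subst sum.swap) (simp add: of_int_sum sum_distrib_right)
  finally have "of_nat n * poly (narayana_gen a b n) 1 =
      (\<Sum>k\<le>n. (of_nat n * of_int (\<Sum>j\<le>n. refined_narayana n j k)) * a ^ k * b ^ (n - k))"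
    by (simp only: sum_distrib_left mult.assoc)
  also have "\<dots> = (\<Sum>k\<le>n. of_nat (n choose k) * of_nat (n choose Suc k) * b ^ (n - k) * a ^ k)"
    unfolding coeff by (simp only: mult_ac)
  also have "\<dots> = (\<Sum>k<n. of_nat (n choose k) * of_nat (n choose Suc k) * b ^ (n - k) * a ^ k)"
    by (simp add: lessThan_Suc_atMost[symmetric] binomial_eq_0)
  finally show ?thesis .
qed

lemma gpoly_Suc_recurrence:
  assumes "a \<noteq> b"
  shows "[:- a, 1:] * smult ((a - b) ^ n) (gpoly a b (Suc n)) =
    smult (a * poly (gpoly a b n) a) ([:- b, 1:] ^ Suc n)
      - smult ((a - b) ^ Suc n) ([:0, 1:] * gpoly a b n)"
    (is "_ = ?N")
proof -
  have "poly ?N a = 0"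
    by (simp add: algebra_simps)
  then have "[:- a, 1:] dvd ?N"
    by (simp only: poly_eq_0_iff_dvd)
  moreover have "smult ((a - b) ^ n) (gpoly a b (Suc n)) = ?N div [:- a, 1:]"
    using assms by (simp del: power_Suc)
  ultimately show ?thesis
    by (simp only: dvd_mult_div_cancel)
qed

lemma pcompose_narayana_gen_recurrence:
  fixes a b :: "'a::field_char_0"
  assumes "a \<noteq> b"
  defines "Q \<equiv> \<lambda>n. pcompose (narayana_gen a b n) [:- b / (a - b), 1 / (a - b):]"
  shows "[:- a, 1:] * smult ((a - b) ^ n) (Q (Suc n)) =
    smult (a * poly (Q n) a) ([:- b, 1:] ^ Suc n) - smult ((a - b) ^ Suc n) ([:0, 1:] * Q n)"
proof (rule poly_ext)
  fix x
  define d where "d = a - b"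
  define t where "t = (x - b) / d"
  have "d \<noteq> 0"
    using assms by (simp add: d_def)
  then have "x - b = d * t" and x_eq: "x = d * t + b" and "x - a = d * (t - 1)"
    by (simp_all add: t_def d_def field_simps)
  have poly_Q: "poly (Q m) y = poly (narayana_gen a b m) ((y - b) / d)" for m y
    by (simp add: Q_def d_def poly_pcompose diff_divide_distrib)
  have "poly ([:- a, 1:] * smult (d ^ n) (Q (Suc n))) x =
      (x - a) * d ^ n * poly (narayana_gen a b (Suc n)) t"
    by (simp add: poly_Q algebra_simps flip: t_def)
  also have "\<dots> = d ^ Suc n * ((t - 1) * poly (narayana_gen a b (Suc n)) t)"
    unfolding \<open>x - a = _\<close> by (simp add: algebra_simps)
  also have "\<dots> = a * poly (Q n) a * (x - b) ^ Suc n - d ^ Suc n * x * poly (Q n) x"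
  proof -
    have "poly (Q n) a = poly (narayana_gen a b n) 1" and "poly (Q n) x = poly (narayana_gen a b n) t"
      using \<open>d \<noteq> 0\<close> by (simp_all add: poly_Q d_def t_def)
    then show ?thesis
      unfolding narayana_gen_recurrence d_def[symmetric] \<open>x - b = d * t\<close> x_eq
      by (simp add: power_mult_distrib algebra_simps)
  qed
  finally show "poly ([:- a, 1:] * smult ((a - b) ^ n) (Q (Suc n))) x =
      poly (smult (a * poly (Q n) a) ([:- b, 1:] ^ Suc n) - smult ((a - b) ^ Suc n) ([:0, 1:] * Q n)) x"
    by (simp add: d_def algebra_simps)
qed

lemma gpoly_eq_pcompose_narayana_gen:
  assumes "a \<noteq> b"
  shows "gpoly a b n = pcompose (narayana_gen a b n) [:- b / (a - b), 1 / (a - b):]"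
proof (induction n)
  case 0
  have "narayana_gen a b 0 = 1"
    by (simp add: narayana_gen_def narayana_entry_def refined_narayana_def)
  then show ?case
    by (simp add: pcompose_1)
next
  case (Suc n)
  have "[:- a, 1:] * smult ((a - b) ^ n) (gpoly a b (Suc n)) =
      [:- a, 1:] * smult ((a - b) ^ n) (pcompose (narayana_gen a b (Suc n)) [:- b / (a - b), 1 / (a - b):])"
    unfolding gpoly_Suc_recurrence[OF assms] pcompose_narayana_gen_recurrence[OF assms] Suc ..
  then have "smult ((a - b) ^ n) (gpoly a b (Suc n)) =
      smult ((a - b) ^ n) (pcompose (narayana_gen a b (Suc n)) [:- b / (a - b), 1 / (a - b):])"
    by (metis mult_cancel_left pCons_eq_0_iff one_neq_zero)
  then show ?case
    by (rule smult_cancel[rotated]) (simp add: assms)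
qed

theorem mainTheorem1:
  fixes a b :: complex
  assumes "a \<noteq> b"
  shows "poly (gpoly a b 0) a = 1 \<and>
    (\<forall>n::nat. n \<ge> 1 \<longrightarrow>
       poly (gpoly a b n) a =
         (1 / of_nat n) * (\<Sum>k<n. of_nat (n choose k) * of_nat (n choose (k + 1)) * b ^ (n - k) * a ^ k))"
proof (intro conjI allI impI)
  fix n :: nat
  assume "n \<ge> 1"
  have "a - b \<noteq> 0"
    using assms by simp
  then have "poly [:- b / (a - b), 1 / (a - b):] a = 1"
    by (simp add: diff_divide_distrib[symmetric])
  then have "poly (gpoly a b n) a = poly (narayana_gen a b n) 1"
    by (simp add: gpoly_eq_pcompose_narayana_gen[OF assms] poly_pcompose)
  with narayana_gen_at_1[of n a b] \<open>n \<ge> 1\<close> show "poly (gpoly a b n) a =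
      (1 / of_nat n) * (\<Sum>k<n. of_nat (n choose k) * of_nat (n choose (k + 1)) * b ^ (n - k) * a ^ k)"
    by (simp add: field_simps)
qed simp

end
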